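(* Let $f(t)\in\mathcal{O}_{\mathbb{C}_p}[[t]]$ be a power series with $f(0)\in E_p$ and $f'(0)\in U_1$. Then there is a unique $\phi\in C(\mathbb{Z}_p,\mathbb{C}_p)$ such that, as formal power series, $$\exp(f(0))\exp\big(f(t)-f(0)\big)=\sum_{n=0}^\infty\phi(n)\frac{t^n}{n!}\;(=A(\phi)).$$
   Context: Fix a prime $p$; $\mathbb{C}_p$ is the completion of an algebraic closure of $\mathbb{Q}_p$ with $|p|=1/p$. $\mathcal{O}_{\mathbb{C}_p}=\{x\in\mathbb{C}_p:|x|\le1\}$, $U_1=\{x\in\mathbb{C}_p:|x-1|<1\}$, and $E_p=\{x\in\mathbb{C}_p:|x|<p^{-1/(p-1)}\}$, the domain of convergence of the exponential series $\exp$. Since $f(t)-f(0)$ has no constant term, $\exp(f(t)-f(0))$ is a well-defined formal power series. $C(\mathbb{Z}_p,\mathbb{C}_p)$ is the space of continuous functions $\mathbb{Z}_p\to\mathbb{C}_p$, and for such $\phi$, $A(\phi)=\sum_{n\ge0}\phi(n)t^n/n!$. *)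

theory Defs
  imports "HOL-Computational_Algebra.Computational_Algebra"
begin

text \<open>A model of C_p: a field of characteristic 0 with an absolute value v that is
non-archimedean, normalised by v p = 1/p, complete, algebraically closed, and in which the
algebraic numbers (algebraic closure of Q) are dense. Such a valued field is isometrically
isomorphic to C_p (the closure of Q is Q_p, the algebraic closure of Q_p inside it is dense,
so it is the completion of an algebraic closure of Q_p).\<close>

definition is_Cp :: "nat \<Rightarrow> ('a::field_char_0 \<Rightarrow> real) \<Rightarrow> bool" where
  "is_Cp p v \<longleftrightarrow>
     prime p \<and>
     (\<forall>x. v x \<ge> 0) \<and> (\<forall>x. v x = 0 \<longleftrightarrow> x = 0) \<and>
     (\<forall>x y. v (x * y) = v x * v y) \<and>
     (\<forall>x y. v (x + y) \<le> max (v x) (v y)) \<and>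
     v (of_nat p) = 1 / real p \<and>
     (\<forall>X::nat \<Rightarrow> 'a. (\<forall>e>0. \<exists>N. \<forall>m\<ge>N. \<forall>n\<ge>N. v (X m - X n) < e)
         \<longrightarrow> (\<exists>L. (\<lambda>n. v (X n - L)) \<longlonglongrightarrow> 0)) \<and>
     (\<forall>q::'a poly. degree q > 0 \<longrightarrow> (\<exists>z. poly q z = 0)) \<and>
     (\<forall>x e. e > 0 \<longrightarrow> (\<exists>y. algebraic y \<and> v (x - y) < e))"

definition Zp :: "('a::field_char_0 \<Rightarrow> real) \<Rightarrow> 'a set" where
  "Zp v = {x. \<forall>e>0. \<exists>n::int. v (x - of_int n) < e}"

definition v_continuous_on :: "('a::field_char_0 \<Rightarrow> real) \<Rightarrow> 'a set \<Rightarrow> ('a \<Rightarrow> 'a) \<Rightarrow> bool" where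
  "v_continuous_on v S g \<longleftrightarrow>
     (\<forall>x\<in>S. \<forall>e>0. \<exists>d>0. \<forall>y\<in>S. v (y - x) < d \<longrightarrow> v (g y - g x) < e)"

definition v_sums :: "('a::field_char_0 \<Rightarrow> real) \<Rightarrow> (nat \<Rightarrow> 'a) \<Rightarrow> 'a \<Rightarrow> bool" where
  "v_sums v a s \<longleftrightarrow> (\<lambda>N. v ((\<Sum>n<N. a n) - s)) \<longlonglongrightarrow> 0"

definition v_exp :: "('a::field_char_0 \<Rightarrow> real) \<Rightarrow> 'a \<Rightarrow> 'a" where
  "v_exp v x = (THE s. v_sums v (\<lambda>n. x ^ n / of_nat (fact n)) s)"

definition Amice :: "('a::field_char_0 \<Rightarrow> 'a) \<Rightarrow> 'a fps" where
  "Amice phi = Abs_fps (\<lambda>n. phi (of_nat n) / of_nat (fact n))"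

end

theory Submission
  imports Defs
begin

text \<open>Write f(t) = f(0) + t + w(t), so that w has linear coefficient f'(0) - 1.
  Then exp(f(t) - f(0)) = e^t exp(w(t)), and comparing
  coefficients, n! times the n-th coefficient of the left-hand side of the theorem is the Mahler
  series exp(f(0)) (sum over k of binom(n,k) c_k), where c_k is k! times the k-th coefficient of
  exp(w). Now c_k is the sum of the terms (k!/i!) [w^i]_k: the factor k!/i! is divisible by
  p^((k-i) div p), and each monomial of degree k in w^i contains at least 2i - k linear factors,
  each of absolute value at most mu = max(1/p, |f'(0) - 1|) < 1. Hence |c_k| is at most
  mu^((k div 2) div p) and tends to 0. Since |k!| |binom(n,k) - binom(m,k)| is at most |n - m|,
  such a Mahler series is uniformly continuous on the naturals for the p-adic absolute value,
  so it extends to a continuous function on their closure Z_p, and uniquely so.\<close>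

definition mahler_sum :: "(nat \<Rightarrow> 'a::semiring_1) \<Rightarrow> nat \<Rightarrow> 'a" where
  "mahler_sum c n = (\<Sum>k\<le>n. of_nat (n choose k) * c k)"

lemma mahler_sum_eq_sum_lessThan:
  assumes "n < N"
  shows "mahler_sum c n = (\<Sum>k<N. of_nat (n choose k) * c k)"
  unfolding mahler_sum_def using assms
  by (intro sum.mono_neutral_left) (auto simp: not_le binomial_eq_0)

lemma fps_linear_ode_unique:
  fixes F G D :: "'a::field_char_0 fps"
  assumes "fps_deriv F = F * D" "fps_deriv G = G * D" "F $ 0 = G $ 0"
  shows "F = G"
proof -
  define H where "H = F - G"
  have dH: "fps_deriv H = H * D"
    using assms unfolding H_def by (simp add: algebra_simps)
  have "H $ n = 0" for n
  proof (induction n rule: less_induct)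
    case (less n)
    show ?case
    proof (cases n)
      case 0
      then show ?thesis using assms(3) by (simp add: H_def)
    next
      case (Suc m)
      have "of_nat (Suc m) * H $ Suc m = fps_deriv H $ m" by simp
      also have "\<dots> = (H * D) $ m" using dH by simp
      also have "\<dots> = (\<Sum>i=0..m. H $ i * D $ (m - i))" by (rule fps_mult_nth)
      also have "\<dots> = 0" using less Suc by (intro sum.neutral) auto
      finally show ?thesis using Suc by (simp del: of_nat_Suc)
    qed
  qed
  then show ?thesis unfolding H_def by (simp add: fps_eq_iff)
qed

lemma fps_exp_compose_add:
  fixes a b :: "'a::field_char_0 fps"
  assumes a0: "a $ 0 = 0" and b0: "b $ 0 = 0"
  shows "fps_exp c oo (a + b) = (fps_exp c oo a) * (fps_exp c oo b)"
proof (rule fps_linear_ode_unique)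
  have exp_compose_deriv:
    "fps_deriv (fps_exp c oo u) = (fps_exp c oo u) * (fps_const c * fps_deriv u)"
    if "u $ 0 = 0" for u :: "'a fps"
    using fps_compose_deriv[OF that, of "fps_exp c"]
    by (simp add: fps_compose_mult_distrib[OF that] fps_const_compose ac_simps)
  show "fps_deriv (fps_exp c oo (a + b)) =
      (fps_exp c oo (a + b)) * (fps_const c * fps_deriv (a + b))"
    using a0 b0 by (intro exp_compose_deriv) simp
  show "fps_deriv ((fps_exp c oo a) * (fps_exp c oo b)) =
      (fps_exp c oo a) * (fps_exp c oo b) * (fps_const c * fps_deriv (a + b))"
    using exp_compose_deriv[OF a0] exp_compose_deriv[OF b0]
    by (simp add: fps_deriv_mult algebra_simps)
qed simp

lemma fact_mult_fps_exp_mult_nth: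
  fixes F :: "'a::field_char_0 fps"
  shows "fact n * (fps_exp 1 * F) $ n = mahler_sum (\<lambda>k. fact k * F $ k) n"
proof -
  have "fact n * (fps_exp 1 * F) $ n = (\<Sum>k\<le>n. fact n * (F $ k / fact (n - k)))"
    by (simp add: mult.commute[of "fps_exp 1"] fps_mult_nth sum_distrib_left atLeast0AtMost)
  also have "\<dots> = mahler_sum (\<lambda>k. fact k * F $ k) n"
    unfolding mahler_sum_def by (intro sum.cong) (simp_all add: binomial_fact field_simps)
  finally show ?thesis .
qed

lemma Amice_eqI:
  fixes phi :: "'a::field_char_0 \<Rightarrow> 'a"
  assumes "\<And>n. phi (of_nat n) = fact n * F $ n"
  shows "Amice phi = F"
  by (rule fps_ext) (simp add: Amice_def assms)

lemma Amice_eq_iff: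
  fixes phi psi :: "'a::field_char_0 \<Rightarrow> 'a"
  shows "Amice phi = Amice psi \<longleftrightarrow> (\<forall>n. phi (of_nat n) = psi (of_nat n))"
  by (simp add: Amice_def fps_eq_iff)

lemma power_div_dvd_fact:
  fixes p n :: nat
  shows "p ^ (n div p) dvd fact n"
proof (induction n)
  case (Suc n)
  show ?case
  proof (cases "p dvd Suc n")
    case True
    then have "p ^ (Suc n div p) = p * p ^ (n div p)"
      by (simp add: div_Suc dvd_eq_mod_eq_0)
    then show ?thesis using mult_dvd_mono[OF True Suc.IH] by (simp add: fact_Suc)
  next
    case False
    then have "Suc n div p = n div p" by (simp add: div_Suc dvd_eq_mod_eq_0)
    then show ?thesis using Suc.IH by (simp add: fact_Suc)
  qed
qed simp

locale nonarch_abs =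
  fixes v :: "'a::field_char_0 \<Rightarrow> real"
  assumes v_nonneg: "v x \<ge> 0"
    and v_eq_0_iff: "v x = 0 \<longleftrightarrow> x = 0"
    and v_mult: "v (x * y) = v x * v y"
    and v_add_le_max: "v (x + y) \<le> max (v x) (v y)"
begin

lemma v_0 [simp]: "v 0 = 0"
  by (simp add: v_eq_0_iff)

lemma abs_v [simp]: "\<bar>v x\<bar> = v x"
  using v_nonneg by simp

lemma v_1 [simp]: "v 1 = 1"
  using v_mult[of 1 1] v_eq_0_iff[of 1] by simp

lemma v_minus [simp]: "v (- x) = v x"
proof -
  have "v (- 1) * v (- 1) = 1" using v_mult[of "- 1" "- 1"] by simp
  then have "v (- 1) = 1"
    using v_nonneg[of "- 1"] by (metis abs_of_nonneg abs_square_eq_1 power2_eq_square)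
  then show ?thesis using v_mult[of "- 1" x] by simp
qed

lemma v_minus_commute: "v (x - y) = v (y - x)"
  by (metis minus_diff_eq v_minus)

lemma v_diff_le_max: "v (x - y) \<le> max (v x) (v y)"
  using v_add_le_max[of x "- y"] by simp

lemma v_ultrametric: "v (x - z) \<le> max (v (x - y)) (v (y - z))"
  using v_add_le_max[of "x - y" "y - z"] by simp

lemma v_mult_le: "v x \<le> a \<Longrightarrow> v y \<le> b \<Longrightarrow> v (x * y) \<le> a * b"
  unfolding v_mult by (rule mult_mono) (auto intro: order_trans[OF v_nonneg])

lemma v_power: "v (x ^ n) = v x ^ n"
  by (induction n) (simp_all add: v_mult)

lemma v_fact_pos: "v (fact k) > 0"
  using v_nonneg[of "fact k"] v_eq_0_iff[of "fact k"] by simp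

lemma eq_if_v_diff_less:
  assumes "\<And>e. e > 0 \<Longrightarrow> v (x - y) < e"
  shows "x = y"
  using assms[of "v (x - y)"] v_nonneg[of "x - y"] v_eq_0_iff[of "x - y"] by force

lemma v_of_nat_le_1: "v (of_nat n) \<le> 1"
proof (induction n)
  case (Suc n)
  then show ?case using v_add_le_max[of 1 "of_nat n"] by simp
qed simp

lemma v_of_int_le_1: "v (of_int z) \<le> 1"
proof (cases "z \<ge> 0")
  case True
  then show ?thesis using v_of_nat_le_1[of "nat z"] by simp
next
  case False
  then have "of_int z = - (of_nat (nat (- z)) :: 'a)" by simp
  then show ?thesis using v_of_nat_le_1[of "nat (- z)"] by simp
qed

lemma v_sum_le:
  assumes "\<And>x. x \<in> A \<Longrightarrow> v (f x) \<le> B" "B \<ge> 0"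
  shows "v (sum f A) \<le> B"
  using assms
proof (induction A rule: infinite_finite_induct)
  case (insert x F)
  then have "v (f x) \<le> B" "v (sum f F) \<le> B" by simp_all
  then show ?case
    using insert(1,2) v_add_le_max[of "f x" "sum f F"] by (simp add: max.bounded_iff order_trans)
qed simp_all

lemma v_sum_less:
  assumes "\<And>x. x \<in> A \<Longrightarrow> v (f x) < B" "B > 0"
  shows "v (sum f A) < B"
  using assms
proof (induction A rule: infinite_finite_induct)
  case (insert x F)
  then have "v (f x) < B" "v (sum f F) < B" by simp_all
  then show ?case
    using insert(1,2) v_add_le_max[of "f x" "sum f F"]
    by (simp add: max_less_iff_conj order_le_less_trans)
qed simp_all

lemma v_prod_le_1:
  assumes "\<And>x. x \<in> A \<Longrightarrow> v (f x) \<le> 1"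
  shows "v (prod f A) \<le> 1"
  using assms
proof (induction A rule: infinite_finite_induct)
  case (insert x F)
  then show ?case using v_mult_le[of "f x" 1 "prod f F" 1] by simp
qed simp_all

lemma v_of_nat_diff_le_1: "v (of_nat m - of_nat n) \<le> 1"
  using v_diff_le_max[of "of_nat m" "of_nat n"] v_of_nat_le_1[of m] v_of_nat_le_1[of n] by simp

lemma v_fact_antimono:
  assumes "k \<le> K"
  shows "v (fact K) \<le> v (fact k)"
proof -
  obtain q :: nat where "fact K = fact k * q" using fact_dvd[OF assms] by blast
  then have "(fact K :: 'a) = fact k * of_nat q" by (metis of_nat_fact of_nat_mult)
  then show ?thesis using v_mult_le[OF order_refl v_of_nat_le_1, of "fact k" q] by simp
qed

lemma v_falling_factorial_diff_le:
  assumes "v x \<le> 1" "v y \<le> 1"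
  shows "v ((\<Prod>i<k. x - of_nat i) - (\<Prod>i<k. y - of_nat i)) \<le> v (x - y)"
proof (induction k)
  case (Suc k)
  define Px where "Px = (\<Prod>i<k. x - of_nat i)"
  define Py where "Py = (\<Prod>i<k. y - of_nat i)"
  have shift_le_1: "v (z - of_nat i) \<le> 1" if "v z \<le> 1" for z i
    using v_diff_le_max[of z "of_nat i"] v_of_nat_le_1[of i] that by simp
  have "Px * (x - of_nat k) - Py * (y - of_nat k) = (Px - Py) * (x - of_nat k) + Py * (x - y)"
    by (simp add: algebra_simps)
  moreover have "v ((Px - Py) * (x - of_nat k)) \<le> v (x - y)"
    using v_mult_le[OF Suc.IH shift_le_1[OF assms(1)]] by (simp add: Px_def Py_def)
  moreover have "v (Py * (x - y)) \<le> v (x - y)"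
    using v_mult_le[OF v_prod_le_1 order_refl, of _ "\<lambda>i. y - of_nat i"] shift_le_1[OF assms(2)]
    by (simp add: Py_def)
  ultimately have "v (Px * (x - of_nat k) - Py * (y - of_nat k)) \<le> v (x - y)"
    by (metis max.bounded_iff order_trans v_add_le_max)
  then show ?case by (simp add: Px_def Py_def)
qed (simp add: v_nonneg)

lemma v_binomial_diff_le:
  "v (fact k) * v (of_nat (n choose k) - of_nat (m choose k)) \<le> v (of_nat n - of_nat m)"
proof -
  have "fact k * (of_nat (n choose k) - of_nat (m choose k)) =
      (\<Prod>i<k. of_nat n - of_nat i) - (\<Prod>i<k. (of_nat m :: 'a) - of_nat i)"
    by (simp add: binomial_gbinomial gbinomial_mult_fact right_diff_distrib atLeast0LessThan)
  then show ?thesis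
    using v_falling_factorial_diff_le[of "of_nat n" "of_nat m" k, OF v_of_nat_le_1 v_of_nat_le_1]
    by (metis v_mult)
qed

lemma v_binomial_diff_less:
  assumes "v (of_nat m - of_nat n) < v (fact K) * r" "k \<le> K"
  shows "v (of_nat (m choose k) - of_nat (n choose k)) < r"
proof -
  have "v (fact K) * v (of_nat (m choose k) - of_nat (n choose k))
      \<le> v (fact k) * v (of_nat (m choose k) - of_nat (n choose k))"
    using assms(2) by (intro mult_right_mono v_fact_antimono v_nonneg)
  also have "\<dots> \<le> v (of_nat m - of_nat n)" by (rule v_binomial_diff_le)
  also have "\<dots> < v (fact K) * r" by (rule assms(1))
  finally show ?thesis using v_fact_pos[of K] by (metis mult_less_cancel_left_pos)
qed

lemma v_power_coeff_le:
  fixes w :: "'a fps"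
  assumes w0: "w $ 0 = 0" and w1: "v (w $ 1) \<le> \<mu>" and w_le_1: "\<And>j. v (w $ j) \<le> 1"
    and "0 \<le> \<mu>" "\<mu> \<le> 1"
  shows "v ((w ^ i) $ k) \<le> \<mu> ^ (2 * i - k)"
proof (induction i arbitrary: k)
  case 0
  show ?case by (cases "k = 0") (simp_all add: v_nonneg)
next
  case (Suc i)
  have w_le: "v (w $ j) \<le> \<mu> ^ (2 - j)" if "j \<ge> 1" for j
    using that w1 w_le_1[of j] by (cases "j = 1") simp_all
  have "v (w $ j * (w ^ i) $ (k - j)) \<le> \<mu> ^ (2 * Suc i - k)" if "j \<le> k" for j
  proof (cases "j = 0")
    case False
    then have "v (w $ j * (w ^ i) $ (k - j)) \<le> \<mu> ^ (2 - j) * \<mu> ^ (2 * i - (k - j))"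
      using w_le Suc.IH by (intro v_mult_le) simp_all
    also have "\<dots> \<le> \<mu> ^ (2 * Suc i - k)"
      unfolding power_add[symmetric] using assms(4,5) False that by (intro power_decreasing) auto
    finally show ?thesis .
  qed (simp add: w0 assms(4))
  then show ?case
    unfolding power_Suc fps_mult_nth by (intro v_sum_le) (auto simp: assms(4))
qed

definition v_uniformly_continuous_nat :: "(nat \<Rightarrow> 'a) \<Rightarrow> bool" where
  "v_uniformly_continuous_nat G \<longleftrightarrow>
     (\<forall>e>0. \<exists>d>0. \<forall>m n. v (of_nat m - of_nat n) < d \<longrightarrow> v (G m - G n) < e)"

lemma mahler_sum_v_uniformly_continuous:
  assumes c_lim: "(\<lambda>k. v (c k)) \<longlonglongrightarrow> 0"
  shows "v_uniformly_continuous_nat (mahler_sum c)"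
  unfolding v_uniformly_continuous_nat_def
proof (intro allI impI)
  fix e :: real assume e: "e > 0"
  obtain B where B: "B > 0" "\<And>k. v (c k) \<le> B"
    using convergent_imp_Bseq[OF convergentI[OF c_lim]] by (auto elim!: BseqE)
  obtain K where K: "\<And>k. k \<ge> K \<Longrightarrow> v (c k) < e"
    using order_tendstoD(2)[OF c_lim e] by (auto simp: eventually_sequentially)
  define d where "d = v (fact K) * (e / B)"
  have "v (mahler_sum c m - mahler_sum c n) < e" if mn: "v (of_nat m - of_nat n) < d" for m n
  proof -
    have term_less: "v ((of_nat (m choose k) - of_nat (n choose k)) * c k) < e" for k
    proof (cases "k \<ge> K")
      case True
      then show ?thesis
        using v_mult_le[OF v_of_nat_diff_le_1 order_refl, of "m choose k" "n choose k" "c k"] K[OF True]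
        by simp
    next
      case False
      have "v ((of_nat (m choose k) - of_nat (n choose k)) * c k)
          \<le> v (of_nat (m choose k) - of_nat (n choose k)) * B"
        by (rule v_mult_le[OF order_refl B(2)])
      also have "\<dots> < e / B * B"
        using v_binomial_diff_less[OF mn[unfolded d_def]] False B(1)
        by (intro mult_strict_right_mono) simp_all
      finally show ?thesis using B(1) by simp
    qed
    have "mahler_sum c m - mahler_sum c n =
        (\<Sum>k<m + n + 1. (of_nat (m choose k) - of_nat (n choose k)) * c k)"
      by (simp add: mahler_sum_eq_sum_lessThan[where N = "m + n + 1"] sum_subtractf
          left_diff_distrib)
    then show ?thesis by (simp only:) (intro v_sum_less term_less e)
  qed
  moreover have "d > 0" using e B v_fact_pos by (simp add: d_def)
  ultimately show "\<exists>d>0. \<forall>m n. v (of_nat m - of_nat n) < d \<longrightarrow>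
      v (mahler_sum c m - mahler_sum c n) < e"
    by blast
qed

lemma of_nat_in_Zp: "of_nat n \<in> Zp v"
  unfolding Zp_def by (auto intro!: exI[of _ "int n"])

end

locale padic_abs = nonarch_abs v for v :: "'a::field_char_0 \<Rightarrow> real" +
  fixes p :: nat
  assumes p_gt_1: "p > 1"
    and v_of_nat_p: "v (of_nat p) = 1 / real p"
begin

lemma v_of_nat_le_if_power_dvd:
  assumes "p ^ e dvd N"
  shows "v (of_nat N) \<le> (1 / real p) ^ e"
proof -
  obtain M where "N = p ^ e * M" using assms by blast
  then show ?thesis
    using v_mult_le[of "of_nat p ^ e" "(1 / real p) ^ e" "of_nat M" 1] v_of_nat_le_1[of M]
    by (simp add: v_power v_of_nat_p)
qed

lemma v_fact_div_fact_le:
  assumes "i \<le> k"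
  shows "v (fact k / fact i) \<le> (1 / real p) ^ ((k - i) div p)"
proof -
  have "(fact k / fact i :: 'a) = of_nat (k choose i) * of_nat (fact (k - i))"
    using binomial_fact[OF assms, where 'a='a] by (simp add: field_simps)
  then show ?thesis
    using v_mult_le[OF v_of_nat_le_1 v_of_nat_le_if_power_dvd[OF power_div_dvd_fact]] by simp
qed

lemma v_fact_mult_exp_compose_nth_le:
  fixes w :: "'a fps"
  assumes w0: "w $ 0 = 0" and w1: "v (w $ 1) \<le> \<mu>" and w_le_1: "\<And>j. v (w $ j) \<le> 1"
    and \<mu>_ge: "1 / real p \<le> \<mu>" and \<mu>_le_1: "\<mu> \<le> 1"
  shows "v (fact k * (fps_exp 1 oo w) $ k) \<le> \<mu> ^ (k div 2 div p)"
proof -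
  have \<mu>_nonneg: "0 \<le> \<mu>" using \<mu>_ge by (rule order_trans[rotated]) simp
  have "v (fact k / fact i * (w ^ i) $ k) \<le> \<mu> ^ (k div 2 div p)" if "i \<le> k" for i
  proof -
    have "v (fact k / fact i * (w ^ i) $ k) \<le> (1 / real p) ^ ((k - i) div p) * \<mu> ^ (2 * i - k)"
      by (intro v_mult_le v_fact_div_fact_le v_power_coeff_le that assms \<mu>_nonneg)
    also have "\<dots> \<le> \<mu> ^ ((k - i) div p + (2 * i - k))"
      unfolding power_add using \<mu>_ge \<mu>_nonneg by (intro mult_right_mono power_mono) auto
    also have "\<dots> \<le> \<mu> ^ (k div 2 div p)"
    proof (rule power_decreasing)
      have "k div 2 div p \<le> ((k - i) + (2 * i - k)) div p" by (intro div_le_mono) linarith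
      also have "\<dots> \<le> ((k - i) + (2 * i - k) * p) div p" using p_gt_1 by (intro div_le_mono) simp
      also have "\<dots> = (k - i) div p + (2 * i - k)" using p_gt_1 by simp
      finally show "k div 2 div p \<le> (k - i) div p + (2 * i - k)" .
    qed (use \<mu>_nonneg \<mu>_le_1 in auto)
    finally show ?thesis .
  qed
  moreover have "fact k * (fps_exp 1 oo w) $ k = (\<Sum>i=0..k. fact k / fact i * (w ^ i) $ k)"
    by (simp add: fps_compose_nth sum_distrib_left)
  ultimately show ?thesis by (auto intro: v_sum_le simp: \<mu>_nonneg)
qed

lemma fact_mult_exp_compose_nth_tendsto_0:
  fixes w :: "'a fps"
  assumes w0: "w $ 0 = 0" and w1: "v (w $ 1) < 1" and w_le_1: "\<And>j. v (w $ j) \<le> 1"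
  shows "(\<lambda>k. v (fact k * (fps_exp 1 oo w) $ k)) \<longlonglongrightarrow> 0"
proof -
  define \<mu> where "\<mu> = max (1 / real p) (v (w $ 1))"
  have \<mu>_lt_1: "\<mu> < 1" using w1 p_gt_1 by (simp add: \<mu>_def)
  have \<mu>_nonneg: "0 \<le> \<mu>" by (simp add: \<mu>_def le_max_iff_disj)
  have bound: "v (fact k * (fps_exp 1 oo w) $ k) \<le> \<mu> ^ (k div 2 div p)" for k
    using \<mu>_lt_1 by (intro v_fact_mult_exp_compose_nth_le w0 w_le_1) (simp_all add: \<mu>_def)
  have "filterlim (\<lambda>k. k div 2 div p) at_top sequentially"
    using p_gt_1 filterlim_compose[OF filterlim_at_top_div_const_nat filterlim_at_top_div_const_nat]
    by simp
  then have lim: "(\<lambda>k. \<mu> ^ (k div 2 div p)) \<longlonglongrightarrow> 0"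
    by (rule filterlim_compose[OF LIMSEQ_power_zero, rotated]) (use \<mu>_lt_1 \<mu>_nonneg in simp)
  show ?thesis
    by (rule tendsto_sandwich[OF always_eventually always_eventually tendsto_const lim])
      (simp_all add: v_nonneg bound)
qed

lemma Zp_nat_dense:
  assumes x: "x \<in> Zp v" and d: "d > 0"
  obtains n where "v (x - of_nat n) < d"
proof -
  obtain z :: int where z: "v (x - of_int z) < d" using x d unfolding Zp_def by blast
  obtain K where K: "(1 / real p) ^ K < d"
    using real_arch_pow_inv[OF d, of "1 / real p"] p_gt_1 by auto
  define n where "n = nat (z mod int (p ^ K))"
  have "z = int n + int (p ^ K) * (z div int (p ^ K))"
    using p_gt_1 by (simp add: n_def)
  then have "of_int z - of_nat n = (of_nat (p ^ K) * of_int (z div int (p ^ K)) :: 'a)"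
    by (metis add_diff_cancel_left' of_int_add of_int_mult of_int_of_nat_eq)
  then have "v (of_int z - of_nat n) \<le> (1 / real p) ^ K * 1"
    using v_mult_le[OF v_of_nat_le_if_power_dvd[OF dvd_refl] v_of_int_le_1] by simp
  then have "v (x - of_nat n) < d"
    using z K v_ultrametric[of x "of_nat n" "of_int z"] by simp
  then show ?thesis by (rule that)
qed

lemma v_continuous_on_Zp_eqI:
  assumes phi: "v_continuous_on v (Zp v) phi" and psi: "v_continuous_on v (Zp v) psi"
    and eq: "\<And>n. phi (of_nat n) = psi (of_nat n)" and x: "x \<in> Zp v"
  shows "phi x = psi x"
proof (rule eq_if_v_diff_less)
  fix e :: real assume e: "e > 0"
  obtain d1 where d1: "d1 > 0" "\<And>y. y \<in> Zp v \<Longrightarrow> v (y - x) < d1 \<Longrightarrow> v (phi y - phi x) < e"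
    using phi x e unfolding v_continuous_on_def by blast
  obtain d2 where d2: "d2 > 0" "\<And>y. y \<in> Zp v \<Longrightarrow> v (y - x) < d2 \<Longrightarrow> v (psi y - psi x) < e"
    using psi x e unfolding v_continuous_on_def by blast
  obtain n where n: "v (of_nat n - x) < min d1 d2"
    using Zp_nat_dense[OF x, of "min d1 d2"] d1 d2 by (auto simp: v_minus_commute)
  then have "v (phi (of_nat n) - phi x) < e" "v (psi (of_nat n) - psi x) < e"
    using d1 d2 of_nat_in_Zp by auto
  then show "v (phi x - psi x) < e"
    using v_ultrametric[of "phi x" "psi x" "phi (of_nat n)"] eq[of n]
    by (simp add: v_minus_commute[of "phi x"])
qed

lemma Amice_eq_imp_eq_on_Zp:
  assumes "v_continuous_on v (Zp v) phi" "v_continuous_on v (Zp v) psi" "Amice phi = Amice psi"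
  shows "\<forall>x\<in>Zp v. phi x = psi x"
  using assms v_continuous_on_Zp_eqI unfolding Amice_eq_iff by blast

end

locale complete_padic_abs = padic_abs v p for v :: "'a::field_char_0 \<Rightarrow> real" and p +
  assumes v_Cauchy_convergent:
    "(\<forall>e>0. \<exists>N. \<forall>m\<ge>N. \<forall>n\<ge>N. v (X m - X n) < e) \<Longrightarrow> \<exists>L. (\<lambda>n. v (X n - L)) \<longlonglongrightarrow> 0"
begin

text \<open>L is the limit of G at x; every modulus of uniform continuity of G also controls
  the approximation of L by G.\<close>

lemma v_uniformly_continuous_nat_limit:
  assumes G: "v_uniformly_continuous_nat G" and x: "x \<in> Zp v"
  obtains L where "\<And>e d n. (\<forall>m n. v (of_nat m - of_nat n) < d \<longrightarrow> v (G m - G n) < e) \<Longrightarrow>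
      v (x - of_nat n) < d \<Longrightarrow> v (G n - L) < e"
proof -
  have "\<exists>n. v (x - of_nat n) < inverse (real (Suc j))" for j
    by (rule Zp_nat_dense[OF x, of "inverse (real (Suc j))"]) auto
  then obtain ns where "\<And>j. v (x - of_nat (ns j)) < inverse (real (Suc j))"
    by metis
  then have "(\<lambda>j. v (x - of_nat (ns j))) \<longlonglongrightarrow> 0"
    by (intro tendsto_sandwich[OF always_eventually always_eventually tendsto_const
          LIMSEQ_inverse_real_of_nat]) (auto simp: v_nonneg less_imp_le)
  then have ns_close: "\<forall>\<^sub>F j in sequentially. v (x - of_nat (ns j)) < d" if "d > 0" for d
    using that by (rule order_tendstoD(2))
  have close_pair: "v (of_nat n - of_nat m) < d"
    if "v (x - of_nat n) < d" "v (x - of_nat m) < d" for n m d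
    using v_ultrametric[of "of_nat n" "of_nat m" x] that by (simp add: v_minus_commute[of x])
  have "\<exists>N. \<forall>a\<ge>N. \<forall>b\<ge>N. v (G (ns a) - G (ns b)) < e" if e: "e > 0" for e
  proof -
    obtain d where "d > 0" and d: "\<And>m n. v (of_nat m - of_nat n) < d \<Longrightarrow> v (G m - G n) < e"
      using G e unfolding v_uniformly_continuous_nat_def by blast
    then obtain N where "\<And>j. j \<ge> N \<Longrightarrow> v (x - of_nat (ns j)) < d"
      using ns_close unfolding eventually_sequentially by blast
    then show ?thesis using close_pair d by blast
  qed
  then obtain L where L: "(\<lambda>j. v (G (ns j) - L)) \<longlonglongrightarrow> 0"
    using v_Cauchy_convergent[of "\<lambda>j. G (ns j)"] by blast
  show ?thesis
  proof (rule that)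
    fix e d n
    assume d: "\<forall>m n. v (of_nat m - of_nat n) < d \<longrightarrow> v (G m - G n) < e"
      and n: "v (x - of_nat n) < d"
    have "d > 0" using n v_nonneg by (rule order.strict_trans1[rotated])
    moreover from this have "e > 0" using d[rule_format, of n n] by simp
    ultimately obtain j where j: "v (G (ns j) - L) < e" "v (x - of_nat (ns j)) < d"
      using eventually_happens[OF eventually_conj[OF order_tendstoD(2)[OF L] ns_close]] by auto
    then have "v (G n - G (ns j)) < e" using d close_pair[OF n] by blast
    then show "v (G n - L) < e" using j v_ultrametric[of "G n" L "G (ns j)"] by simp
  qed
qed

lemma v_uniformly_continuous_nat_extends:
  assumes G: "v_uniformly_continuous_nat G"
  obtains phi where "v_continuous_on v (Zp v) phi" "\<And>n. phi (of_nat n) = G n"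
proof -
  have "\<forall>x\<in>Zp v. \<exists>L. \<forall>e d n. (\<forall>m n. v (of_nat m - of_nat n) < d \<longrightarrow> v (G m - G n) < e) \<longrightarrow>
      v (x - of_nat n) < d \<longrightarrow> v (G n - L) < e"
    by (metis v_uniformly_continuous_nat_limit[OF G])
  then obtain phi where phi: "\<And>x e d n. x \<in> Zp v \<Longrightarrow>
      (\<forall>m n. v (of_nat m - of_nat n) < d \<longrightarrow> v (G m - G n) < e) \<Longrightarrow>
      v (x - of_nat n) < d \<Longrightarrow> v (G n - phi x) < e"
    by metis
  have modulus: "\<exists>d>0. \<forall>m n. v (of_nat m - of_nat n) < d \<longrightarrow> v (G m - G n) < e" if "e > 0" for e
    using G that unfolding v_uniformly_continuous_nat_def by blast
  show ?thesis
  proof (rule that)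
    show "phi (of_nat n) = G n" for n
      using modulus phi[OF of_nat_in_Zp] by (metis eq_if_v_diff_less diff_self v_0)
    show "v_continuous_on v (Zp v) phi"
      unfolding v_continuous_on_def
    proof (intro ballI allI impI)
      fix x e assume x: "x \<in> Zp v" and e: "(e::real) > 0"
      obtain d where d: "d > 0" "\<forall>m n. v (of_nat m - of_nat n) < d \<longrightarrow> v (G m - G n) < e"
        using modulus[OF e] by blast
      obtain n where n: "v (x - of_nat n) < d" using Zp_nat_dense[OF x d(1)] .
      have "v (phi y - phi x) < e" if y: "y \<in> Zp v" "v (y - x) < d" for y
      proof -
        have "v (y - of_nat n) < d" using v_ultrametric[of y "of_nat n" x] y n by simp
        then have "v (G n - phi y) < e" "v (G n - phi x) < e" using phi[OF _ d(2)] x y n by auto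
        then show ?thesis
          using v_ultrametric[of "phi y" "phi x" "G n"] by (simp add: v_minus_commute[of "phi y"])
      qed
      then show "\<exists>d>0. \<forall>y\<in>Zp v. v (y - x) < d \<longrightarrow> v (phi y - phi x) < e" using d(1) by blast
    qed
  qed
qed

lemma Amice_exp_mult_exists:
  fixes F :: "'a fps"
  assumes "(\<lambda>k. v (fact k * F $ k)) \<longlonglongrightarrow> 0"
  obtains phi where "v_continuous_on v (Zp v) phi" "Amice phi = fps_exp 1 * F"
proof -
  obtain phi where "v_continuous_on v (Zp v) phi"
    and "\<And>n. phi (of_nat n) = mahler_sum (\<lambda>k. fact k * F $ k) n"
    using v_uniformly_continuous_nat_extends[OF mahler_sum_v_uniformly_continuous[OF assms]]
    by blast
  moreover from this(2) have "Amice phi = fps_exp 1 * F"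
    by (intro Amice_eqI) (simp add: fact_mult_fps_exp_mult_nth)
  ultimately show ?thesis using that by blast
qed

end

lemma is_Cp_imp_complete_padic_abs:
  assumes "is_Cp p v"
  shows "complete_padic_abs v p"
  using assms prime_gt_1_nat by unfold_locales (simp_all add: is_Cp_def)

theorem proposition5p2:
  fixes p :: nat and v :: "'a::field_char_0 \<Rightarrow> real" and f :: "'a fps"
  assumes Cp: "is_Cp p v"
    and O: "\<forall>n. v (fps_nth f n) \<le> 1"
    and E: "v (fps_nth f 0) < real p powr (- 1 / (real p - 1))"
    and U: "v (fps_nth f 1 - 1) < 1"
  shows "(\<exists>phi. v_continuous_on v (Zp v) phi \<and>
           fps_const (v_exp v (fps_nth f 0)) * (fps_exp 1 oo (f - fps_const (fps_nth f 0)))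
             = Amice phi) \<and>
         (\<forall>phi psi. v_continuous_on v (Zp v) phi \<and> v_continuous_on v (Zp v) psi \<and>
           fps_const (v_exp v (fps_nth f 0)) * (fps_exp 1 oo (f - fps_const (fps_nth f 0))) = Amice phi \<and>
           fps_const (v_exp v (fps_nth f 0)) * (fps_exp 1 oo (f - fps_const (fps_nth f 0))) = Amice psi
           \<longrightarrow> (\<forall>x\<in>Zp v. phi x = psi x))"
proof -
  interpret complete_padic_abs v p using Cp by (rule is_Cp_imp_complete_padic_abs)
  define w where "w = f - fps_const (f $ 0) - fps_X"
  define c where "c = v_exp v (f $ 0)"
  have "f - fps_const (f $ 0) = fps_X + w" "w $ 0 = 0" by (simp_all add: w_def)
  then have "fps_exp 1 oo (f - fps_const (f $ 0)) = fps_exp 1 * (fps_exp 1 oo w)"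
    using fps_exp_compose_add[of fps_X w] by simp
  then have A: "fps_const c * (fps_exp 1 oo (f - fps_const (f $ 0))) =
      fps_exp 1 * (fps_const c * (fps_exp 1 oo w))"
    by (simp add: ac_simps)
  have "v (w $ j) \<le> 1" for j
    using O U by (cases "j = 1") (auto simp: w_def)
  then have "(\<lambda>k. v (fact k * (fps_exp 1 oo w) $ k)) \<longlonglongrightarrow> 0"
    using U by (intro fact_mult_exp_compose_nth_tendsto_0) (simp_all add: w_def)
  then have "(\<lambda>k. v (fact k * (fps_const c * (fps_exp 1 oo w)) $ k)) \<longlonglongrightarrow> 0"
    by (simp add: v_mult mult.left_commute tendsto_mult_right_zero)
  then obtain phi where "v_continuous_on v (Zp v) phi"
      "Amice phi = fps_exp 1 * (fps_const c * (fps_exp 1 oo w))"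
    by (rule Amice_exp_mult_exists)
  then show ?thesis
    using A Amice_eq_imp_eq_on_Zp unfolding c_def by metis
qed

end
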